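(* Let $f\in\mathfrak{F}$. If $G_1,G_2\in\mathcal{B}_f$, then $G_1\times G_2\in\mathcal{B}_f$.
   Context: $\mathfrak{F}$ is the set of nondecreasing functions from some interval $[Q,\infty)\cap\mathbb{N}$ to the nonnegative reals; $g\preceq f$ means there exist $N\ge0$ and positive integers $K,M$ with $g(n)\le Kf(Mn)$ for all $n\ge N$. For a group $G$ with finite generating set $A$, $S=A\cup A^{-1}$, $\pi:S^*\to G$ the evaluation map and $d_A$ the word metric: a Cayley automatic representation is a bijection $\psi:L\to G$ from a regular $L\subseteq S^*$ such that for each $a\in A$ the relation $\{(\psi^{-1}(g),\psi^{-1}(ga)) : g\in G\}$ is FA-recognizable (i.e., the language of convolutions — parallel readings of the two strings with the shorter padded by a new symbol — is regular). Its function is $h(n)=\max\{d_A(\pi(w),\psi(w)): w\in L,|w|\le n\}$, and $G\in\mathcal{B}_f$ means some Cayley automatic representation (for some finite generating set; this is independent of the choice) has $h\preceq f$. *)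

theory Defs
  imports "HOL-Algebra.Algebra" Complex_Main
begin

definition in_frakF :: "(nat \<Rightarrow> real) \<Rightarrow> bool" where
  "in_frakF f \<longleftrightarrow> (\<exists>Q::nat. (\<forall>m n. Q \<le> m \<longrightarrow> m \<le> n \<longrightarrow> f m \<le> f n) \<and> (\<forall>n\<ge>Q. 0 \<le> f n))"

definition preceq :: "(nat \<Rightarrow> real) \<Rightarrow> (nat \<Rightarrow> real) \<Rightarrow> bool" where
  "preceq g f \<longleftrightarrow> (\<exists>N K M::nat. 0 < K \<and> 0 < M \<and> (\<forall>n\<ge>N. g n \<le> real K * f (M * n)))"

definition regular_lang :: "'b set \<Rightarrow> 'b list set \<Rightarrow> bool" where
  "regular_lang \<Sigma> L \<longleftrightarrow> L \<subseteq> lists \<Sigma> \<and>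
     (\<exists>(Q::nat set) q0 (\<delta>::nat \<Rightarrow> 'b \<Rightarrow> nat) F.
        finite Q \<and> q0 \<in> Q \<and> (\<forall>q\<in>Q. \<forall>x\<in>\<Sigma>. \<delta> q x \<in> Q) \<and> F \<subseteq> Q \<and>
        L = {w \<in> lists \<Sigma>. fold (\<lambda>x q. \<delta> q x) w q0 \<in> F})"

definition conv :: "'b list \<Rightarrow> 'b list \<Rightarrow> ('b option \<times> 'b option) list" where
  "conv u v = map (\<lambda>i. (if i < length u then Some (u ! i) else None,
                         if i < length v then Some (v ! i) else None))
                  [0..<max (length u) (length v)]"

definition fa_recognizable :: "'b set \<Rightarrow> ('b list \<times> 'b list) set \<Rightarrow> bool" where
  "fa_recognizable \<Sigma> R \<longleftrightarrow>
     regular_lang (insert None (Some ` \<Sigma>) \<times> insert None (Some ` \<Sigma>)) ((\<lambda>(u, v). conv u v) ` R)"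

definition sym_gens :: "('a, 'm) monoid_scheme \<Rightarrow> 'a set \<Rightarrow> 'a set" where
  "sym_gens G A = A \<union> (\<lambda>a. inv\<^bsub>G\<^esub> a) ` A"

fun eval_word :: "('a, 'm) monoid_scheme \<Rightarrow> 'a list \<Rightarrow> 'a" where
  "eval_word G [] = \<one>\<^bsub>G\<^esub>"
| "eval_word G (x # w) = x \<otimes>\<^bsub>G\<^esub> eval_word G w"

definition fin_gen_set :: "('a, 'm) monoid_scheme \<Rightarrow> 'a set \<Rightarrow> bool" where
  "fin_gen_set G A \<longleftrightarrow> finite A \<and> A \<subseteq> carrier G \<and> generate G A = carrier G"

definition word_length :: "('a, 'm) monoid_scheme \<Rightarrow> 'a set \<Rightarrow> 'a \<Rightarrow> nat" where
  "word_length G A g = (LEAST n. \<exists>w \<in> lists (sym_gens G A). length w = n \<and> eval_word G w = g)"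

definition word_dist :: "('a, 'm) monoid_scheme \<Rightarrow> 'a set \<Rightarrow> 'a \<Rightarrow> 'a \<Rightarrow> nat" where
  "word_dist G A g h = word_length G A (inv\<^bsub>G\<^esub> g \<otimes>\<^bsub>G\<^esub> h)"

definition cayley_aut_rep :: "('a, 'm) monoid_scheme \<Rightarrow> 'a set \<Rightarrow> 'a list set \<Rightarrow> ('a list \<Rightarrow> 'a) \<Rightarrow> bool" where
  "cayley_aut_rep G A L \<psi> \<longleftrightarrow>
     regular_lang (sym_gens G A) L \<and> bij_betw \<psi> L (carrier G) \<and>
     (\<forall>a\<in>A. fa_recognizable (sym_gens G A)
        {(inv_into L \<psi> g, inv_into L \<psi> (g \<otimes>\<^bsub>G\<^esub> a)) | g. g \<in> carrier G})"

text \<open>h(n) = max of d_A(pi(w), psi(w)) over w in L with |w| <= n (0 if there is no such w).\<close>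
definition caut_fun :: "('a, 'm) monoid_scheme \<Rightarrow> 'a set \<Rightarrow> 'a list set \<Rightarrow> ('a list \<Rightarrow> 'a) \<Rightarrow> nat \<Rightarrow> real" where
  "caut_fun G A L \<psi> n =
     Max (insert 0 {real (word_dist G A (eval_word G w) (\<psi> w)) | w. w \<in> L \<and> length w \<le> n})"

definition in_Bf :: "(nat \<Rightarrow> real) \<Rightarrow> ('a, 'm) monoid_scheme \<Rightarrow> bool" where
  "in_Bf f G \<longleftrightarrow> (\<exists>A L \<psi>. fin_gen_set G A \<and> cayley_aut_rep G A L \<psi> \<and> preceq (caut_fun G A L \<psi>) f)"

end

theory Submission
  imports Defs
begin

text \<open>Interleave the two representations: \<open>(g\<^sub>1, g\<^sub>2)\<close> is represented by the convolution of
  \<open>\<psi>\<^sub>1\<inverse> g\<^sub>1\<close> and \<open>\<psi>\<^sub>2\<inverse> g\<^sub>2\<close>, each convolution symbol \<open>(x, y)\<close> being spelled as the four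
  generators \<open>(x, \<one>) (\<one>, \<one>) (\<one>, y) (\<one>, \<one>)\<close>, and a padding symbol of a component as
  \<open>(s, \<one>) (s\<inverse>, \<one>)\<close>. Substituting blocks of constant length preserves regularity, and
  the convolution of two such words is again a block substitution of a convolution of the
  component relations, so the product representation is Cayley automatic. Every block evaluates
  to the symbol it spells, so a word evaluates to the pair of its component values and its
  distance to its representative is at most the sum of the component distances. Hence
  \<open>h \<le> h\<^sub>1 + h\<^sub>2\<close>, and \<open>h\<^sub>1 + h\<^sub>2 \<preceq> f\<close> because \<open>f\<close> is eventually nondecreasing.\<close>

section \<open>Regular languages via left quotients\<close>

definition left_quotient :: "'b list \<Rightarrow> 'b list set \<Rightarrow> 'b list set" where
  "left_quotient w L = {v. w @ v \<in> L}"

lemma left_quotient_Nil [simp]: "left_quotient [] L = L"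
  by (simp add: left_quotient_def)

lemma left_quotient_append: "left_quotient (u @ v) L = left_quotient v (left_quotient u L)"
  by (simp add: left_quotient_def)

lemma regular_lang_subset_lists: "regular_lang \<Sigma> L \<Longrightarrow> L \<subseteq> lists \<Sigma>"
  unfolding regular_lang_def by blast

lemma finite_left_quotients:
  assumes "regular_lang \<Sigma> L"
  shows "finite ((\<lambda>w. left_quotient w L) ` lists \<Sigma>)"
proof -
  obtain Q q0 \<delta> F where fin: "finite (Q::nat set)" and q0: "q0 \<in> Q"
    and \<delta>: "\<forall>q\<in>Q. \<forall>x\<in>\<Sigma>. \<delta> q x \<in> Q"
    and L: "L = {w \<in> lists \<Sigma>. fold (\<lambda>x q. \<delta> q x) w q0 \<in> F}"
    using assms unfolding regular_lang_def by blast
  let ?run = "\<lambda>w q. fold (\<lambda>x q. \<delta> q x) w q"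
  let ?accepted_from = "\<lambda>q. {v \<in> lists \<Sigma>. ?run v q \<in> F}"
  have run_in: "?run w q \<in> Q" if "w \<in> lists \<Sigma>" "q \<in> Q" for w q
    using that by (induction w arbitrary: q) (auto simp: \<delta>)
  have "left_quotient w L = ?accepted_from (?run w q0)" if "w \<in> lists \<Sigma>" for w
    using that unfolding left_quotient_def L by auto
  then have "(\<lambda>w. left_quotient w L) ` lists \<Sigma> \<subseteq> ?accepted_from ` Q"
    using run_in q0 by blast
  then show ?thesis
    using fin finite_subset by blast
qed

lemma regular_langI_automaton:
  fixes Q :: "'s set" and \<delta> :: "'s \<Rightarrow> 'b \<Rightarrow> 's"
  assumes fin: "finite Q" and q0: "q0 \<in> Q" and \<delta>: "\<And>q x. q \<in> Q \<Longrightarrow> x \<in> \<Sigma> \<Longrightarrow> \<delta> q x \<in> Q"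
    and L: "L = {w \<in> lists \<Sigma>. fold (\<lambda>x q. \<delta> q x) w q0 \<in> F}"
  shows "regular_lang \<Sigma> L"
proof -
  obtain e where e: "bij_betw e Q {0..<card Q}"
    using ex_bij_betw_finite_nat[OF fin] by blast
  have inj: "inj_on e Q"
    using e by (rule bij_betw_imp_inj_on)
  define \<delta>' where "\<delta>' n x = e (\<delta> (inv_into Q e n) x)" for n x
  let ?run = "\<lambda>w q. fold (\<lambda>x q. \<delta> q x) w q" and ?run' = "\<lambda>w n. fold (\<lambda>x n. \<delta>' n x) w n"
  have run_in: "?run w q \<in> Q" if "w \<in> lists \<Sigma>" "q \<in> Q" for w q
    using that by (induction w arbitrary: q) (auto simp: \<delta>)
  have run': "?run' w (e q) = e (?run w q)" if "w \<in> lists \<Sigma>" "q \<in> Q" for w q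
    using that by (induction w arbitrary: q) (auto simp: \<delta>'_def inv_into_f_f[OF inj] \<delta>)
  show ?thesis
    unfolding regular_lang_def
  proof (intro conjI exI)
    show "L \<subseteq> lists \<Sigma>"
      using L by blast
    show "finite {0..<card Q}" "e q0 \<in> {0..<card Q}" "e ` (F \<inter> Q) \<subseteq> {0..<card Q}"
      using bij_betw_apply[OF e] q0 by auto
    show "\<forall>n\<in>{0..<card Q}. \<forall>x\<in>\<Sigma>. \<delta>' n x \<in> {0..<card Q}"
      using e \<delta> unfolding \<delta>'_def bij_betw_def by (metis image_eqI inv_into_into)
    have "?run' w (e q0) \<in> e ` (F \<inter> Q) \<longleftrightarrow> ?run w q0 \<in> F" if "w \<in> lists \<Sigma>" for w
      using run'[OF that q0] inj_on_image_mem_iff[OF inj run_in[OF that q0], of "F \<inter> Q"]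
        run_in[OF that q0] by simp
    then show "L = {w \<in> lists \<Sigma>. ?run' w (e q0) \<in> e ` (F \<inter> Q)}"
      unfolding L by blast
  qed
qed

lemma fold_left_quotient: "fold (\<lambda>x Z. left_quotient [x] Z) w Z = left_quotient w Z"
  by (induction w arbitrary: Z) (simp_all flip: left_quotient_append)

lemma regular_langI_quotients:
  assumes "L \<subseteq> lists \<Sigma>" and "finite ((\<lambda>w. left_quotient w L) ` lists \<Sigma>)"
  shows "regular_lang \<Sigma> L"
proof (rule regular_langI_automaton)
  show "L = {w \<in> lists \<Sigma>. fold (\<lambda>x Z. left_quotient [x] Z) w L \<in> {Z. [] \<in> Z}}"
    using assms(1) unfolding fold_left_quotient by (auto simp: left_quotient_def)
  show "left_quotient [x] Z \<in> (\<lambda>w. left_quotient w L) ` lists \<Sigma>"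
    if "Z \<in> (\<lambda>w. left_quotient w L) ` lists \<Sigma>" "x \<in> \<Sigma>" for Z x
    using that by (auto simp flip: left_quotient_append intro!: image_eqI)
next
  show "L \<in> (\<lambda>w. left_quotient w L) ` lists \<Sigma>"
    by (rule image_eqI[where x = "[]"]) simp_all
qed (rule assms(2))

lemma regular_lang_Int:
  assumes "regular_lang \<Sigma> L" and "regular_lang \<Sigma> M"
  shows "regular_lang \<Sigma> (L \<inter> M)"
proof (rule regular_langI_quotients)
  show "L \<inter> M \<subseteq> lists \<Sigma>"
    using regular_lang_subset_lists[OF assms(1)] by blast
  have "left_quotient w (L \<inter> M) = left_quotient w L \<inter> left_quotient w M" for w
    by (auto simp: left_quotient_def)
  then have "(\<lambda>w. left_quotient w (L \<inter> M)) ` lists \<Sigma> \<subseteq>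
      case_prod (\<inter>) ` ((\<lambda>w. left_quotient w L) ` lists \<Sigma> \<times> (\<lambda>w. left_quotient w M) ` lists \<Sigma>)"
    by force
  then show "finite ((\<lambda>w. left_quotient w (L \<inter> M)) ` lists \<Sigma>)"
    by (rule finite_subset) (use assms in \<open>simp add: finite_left_quotients\<close>)
qed

lemma regular_lang_lists:
  assumes "\<Gamma> \<subseteq> \<Sigma>"
  shows "regular_lang \<Sigma> (lists \<Gamma>)"
proof (rule regular_langI_quotients)
  have "(\<lambda>w. left_quotient w (lists \<Gamma>)) ` lists \<Sigma> \<subseteq> {lists \<Gamma>, {}}"
    by (auto simp: left_quotient_def)
  then show "finite ((\<lambda>w. left_quotient w (lists \<Gamma>)) ` lists \<Sigma>)"
    by (rule finite_subset) simp
qed (use assms in auto)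

lemma regular_lang_vimage_map:
  assumes "regular_lang \<Sigma> L" and "h ` \<Gamma> \<subseteq> \<Sigma>"
  shows "regular_lang \<Gamma> {c \<in> lists \<Gamma>. map h c \<in> L}"
proof (rule regular_langI_quotients)
  let ?M = "{c \<in> lists \<Gamma>. map h c \<in> L}"
  have "left_quotient x ?M \<in> (\<lambda>Z. {v \<in> lists \<Gamma>. map h v \<in> Z}) ` (\<lambda>w. left_quotient w L) ` lists \<Sigma>"
    if "x \<in> lists \<Gamma>" for x
  proof (intro image_eqI)
    show "left_quotient x ?M = {v \<in> lists \<Gamma>. map h v \<in> left_quotient (map h x) L}"
      using that by (auto simp: left_quotient_def)
    show "map h x \<in> lists \<Sigma>"
      using that assms(2) by (auto simp: image_subset_iff)
  qed (rule refl)
  then have "(\<lambda>w. left_quotient w ?M) ` lists \<Gamma> \<subseteq>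
      (\<lambda>Z. {v \<in> lists \<Gamma>. map h v \<in> Z}) ` (\<lambda>w. left_quotient w L) ` lists \<Sigma>"
    by (rule image_subsetI)
  then show "finite ((\<lambda>w. left_quotient w ?M) ` lists \<Gamma>)"
    using finite_left_quotients[OF assms(1)] by (rule finite_subset[OF _ finite_imageI])
qed auto

section \<open>Padded words and convolutions\<close>

definition padded :: "'b list set \<Rightarrow> 'b option list set" where
  "padded A = {map Some a @ replicate m None | a m. a \<in> A}"

lemma map_Some_append_eq_padded:
  "map Some a0 @ v = map Some a @ replicate m None \<longleftrightarrow>
     (\<exists>a1. a = a0 @ a1 \<and> v = map Some a1 @ replicate m None)"
proof
  assume "map Some a0 @ v = map Some a @ replicate m None"
  then obtain us where
    "map Some a0 = map Some a @ us \<and> us @ v = replicate m None \<or>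
     map Some a0 @ us = map Some a \<and> v = us @ replicate m None"
    using append_eq_append_conv2 by blast
  then show "\<exists>a1. a = a0 @ a1 \<and> v = map Some a1 @ replicate m None"
  proof
    assume h: "map Some a0 = map Some a @ us \<and> us @ v = replicate m None"
    then have "us = []"
      by (cases us) (auto simp: map_eq_append_conv Cons_replicate_eq)
    then show ?thesis
      using h by (auto simp: inj_map_eq_map)
  next
    assume h: "map Some a0 @ us = map Some a \<and> v = us @ replicate m None"
    then obtain p q where "a = p @ q" "map Some a0 = map Some p" "us = map Some q"
      by (metis map_eq_append_conv)
    then show ?thesis
      using h by (auto simp: inj_map_eq_map)
  qed
qed auto

lemma padded_prefix_with_None:
  assumes "None \<in> set x" and "x @ v = map Some a @ replicate m None"
  shows "(\<exists>m'. x = map Some a @ replicate m' None) \<and> (\<exists>k. v = replicate k None)"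
proof -
  obtain us where
    "x = map Some a @ us \<and> us @ v = replicate m None \<or> x @ us = map Some a \<and> v = us @ replicate m None"
    using assms(2) append_eq_append_conv2 by blast
  then show ?thesis
  proof
    assume h: "x = map Some a @ us \<and> us @ v = replicate m None"
    then have "us = replicate (length us) None" "v = replicate (length v) None"
      by (metis Un_iff in_set_replicate replicate_eqI set_append)+
    then show ?thesis
      using h by metis
  next
    assume "x @ us = map Some a \<and> v = us @ replicate m None"
    then show ?thesis
      using assms(1) by (metis Un_iff ex_map_conv option.distinct(1) set_append)
  qed
qed

lemma left_quotient_padded_map_Some:
  "left_quotient (map Some a0) (padded A) = padded (left_quotient a0 A)"
  unfolding left_quotient_def padded_def
  by (auto simp: map_Some_append_eq_padded)

lemma left_quotient_padded_None:
  fixes x :: "'b option list"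
  assumes "None \<in> set x"
  shows "left_quotient x (padded A) \<in> {range (\<lambda>k. replicate k None), {}}"
proof (cases "left_quotient x (padded A) = {}")
  case False
  then obtain v a m where "a \<in> A" "x @ v = map Some a @ replicate m None"
    unfolding left_quotient_def padded_def by blast
  then obtain m' where a: "a \<in> A" and x: "x = map Some a @ replicate m' None"
    using padded_prefix_with_None[OF assms] by blast
  have "left_quotient x (padded A) = range (\<lambda>k. replicate k None)"
  proof (intro equalityI subsetI)
    fix v assume "v \<in> left_quotient x (padded A)"
    then show "v \<in> range (\<lambda>k. replicate k None)"
      using padded_prefix_with_None[OF assms]
      unfolding left_quotient_def padded_def by blast
  next
    fix v :: "'b option list" assume "v \<in> range (\<lambda>k. replicate k None)"
    then obtain k where "v = replicate k None" by blast
    then have "x @ v = map Some a @ replicate (m' + k) None"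
      using x by (simp add: replicate_add)
    then show "v \<in> left_quotient x (padded A)"
      using a unfolding left_quotient_def padded_def by blast
  qed
  then show ?thesis by blast
qed simp

lemma regular_lang_padded:
  assumes "regular_lang \<Sigma> A"
  shows "regular_lang (insert None (Some ` \<Sigma>)) (padded A)"
proof (rule regular_langI_quotients)
  show "padded A \<subseteq> lists (insert None (Some ` \<Sigma>))"
    using regular_lang_subset_lists[OF assms] unfolding padded_def by force
  let ?R = "padded ` (\<lambda>w. left_quotient w A) ` lists \<Sigma> \<union> {range (\<lambda>k. replicate k None), {}}"
  have "left_quotient x (padded A) \<in> ?R" if x: "x \<in> lists (insert None (Some ` \<Sigma>))" for x
  proof (cases "None \<in> set x")
    case False
    then have "x = map Some (map the x)" "map the x \<in> lists \<Sigma>"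
      using x by (induction x) auto
    then show ?thesis
      by (metis UnI1 image_eqI left_quotient_padded_map_Some)
  next
    case True
    then show ?thesis
      using left_quotient_padded_None by blast
  qed
  moreover have "finite ?R"
    using finite_left_quotients[OF assms] by blast
  ultimately show "finite ((\<lambda>x. left_quotient x (padded A)) ` lists (insert None (Some ` \<Sigma>)))"
    by (meson finite_subset image_subsetI)
qed

lemma padded_word_inj:
  assumes "map Some u @ replicate m None = map Some u' @ replicate m' None"
  shows "u = u'"
proof -
  have "map the (takeWhile (\<lambda>x. x \<noteq> None) (map Some w @ replicate k None)) = w" for w :: "'b list" and k
    by (induction w) (auto simp: takeWhile_replicate)
  then show ?thesis
    by (metis assms)
qed

text \<open>\<^const>\<open>conv\<close> requires both words over one alphabet; \<open>pad_zip\<close> lifts this restriction,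
  which is needed to convolve the relations of the two factors of a product.\<close>
fun pad_zip :: "'x list \<Rightarrow> 'y list \<Rightarrow> ('x option \<times> 'y option) list" where
  "pad_zip [] [] = []"
| "pad_zip (x # xs) [] = (Some x, None) # pad_zip xs []"
| "pad_zip [] (y # ys) = (None, Some y) # pad_zip [] ys"
| "pad_zip (x # xs) (y # ys) = (Some x, Some y) # pad_zip xs ys"

lemma length_pad_zip [simp]: "length (pad_zip u v) = max (length u) (length v)"
  by (induction u v rule: pad_zip.induct) auto

lemma nth_pad_zip:
  "i < max (length u) (length v) \<Longrightarrow>
     pad_zip u v ! i = (if i < length u then Some (u ! i) else None,
                        if i < length v then Some (v ! i) else None)"
  by (induction u v arbitrary: i rule: pad_zip.induct) (auto simp: nth_Cons')

lemma conv_eq_pad_zip: "conv u v = pad_zip u v"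
  by (rule nth_equalityI) (simp_all add: conv_def nth_pad_zip)

lemma map_fst_pad_zip:
  "map fst (pad_zip u v) = map Some u @ replicate (max (length u) (length v) - length u) None"
  by (induction u v rule: pad_zip.induct) auto

lemma map_snd_pad_zip:
  "map snd (pad_zip u v) = map Some v @ replicate (max (length u) (length v) - length v) None"
  by (induction u v rule: pad_zip.induct) auto

lemma set_pad_zip: "set (pad_zip u v) \<subseteq> insert None (Some ` set u) \<times> insert None (Some ` set v) - {(None, None)}"
  by (induction u v rule: pad_zip.induct) auto

lemma pad_zip_in_lists:
  "u \<in> lists A \<Longrightarrow> v \<in> lists B \<Longrightarrow> pad_zip u v \<in> lists (insert None (Some ` A) \<times> insert None (Some ` B))"
  by (induction u v rule: pad_zip.induct) auto

lemma pad_zip_eqI: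
  assumes "map fst c = map Some u @ replicate m None" and "map snd c = map Some v @ replicate m' None"
    and "(None, None) \<notin> set c"
  shows "c = pad_zip u v"
  using assms
proof (induction u v arbitrary: c m m' rule: pad_zip.induct)
  case 1 then show ?case by (cases c) (auto simp: Cons_replicate_eq)
next
  case 2 then show ?case by (cases c) (auto simp: Cons_replicate_eq)
next
  case 3 then show ?case by (cases c) (auto simp: Cons_replicate_eq)
next
  case 4 then show ?case by (cases c) (auto simp: Cons_replicate_eq)
qed

lemma pad_zip_image_eq_padded:
  "{pad_zip u v | u v. u \<in> A \<and> v \<in> B} =
     {c. map fst c \<in> padded A \<and> map snd c \<in> padded B \<and> (None, None) \<notin> set c}"
proof (intro equalityI subsetI)
  fix c assume "c \<in> {pad_zip u v | u v. u \<in> A \<and> v \<in> B}"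
  then obtain u v where c: "c = pad_zip u v" and "u \<in> A" "v \<in> B"
    by blast
  then have "map fst c \<in> padded A" "map snd c \<in> padded B"
    unfolding padded_def c map_fst_pad_zip map_snd_pad_zip by blast+
  then show "c \<in> {c. map fst c \<in> padded A \<and> map snd c \<in> padded B \<and> (None, None) \<notin> set c}"
    using set_pad_zip[of u v] c by blast
next
  fix c assume "c \<in> {c. map fst c \<in> padded A \<and> map snd c \<in> padded B \<and> (None, None) \<notin> set c}"
  then show "c \<in> {pad_zip u v | u v. u \<in> A \<and> v \<in> B}"
    unfolding padded_def using pad_zip_eqI by blast
qed

lemma regular_lang_pad_zip:
  assumes A: "regular_lang \<Sigma> A" and B: "regular_lang \<Gamma> B"
  shows "regular_lang (insert None (Some ` \<Sigma>) \<times> insert None (Some ` \<Gamma>)) {pad_zip u v | u v. u \<in> A \<and> v \<in> B}"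
proof -
  let ?\<Delta> = "insert None (Some ` \<Sigma>) \<times> insert None (Some ` \<Gamma>)"
  have "pad_zip u v \<in> lists ?\<Delta>" if "u \<in> A" "v \<in> B" for u v
    using that regular_lang_subset_lists[OF A] regular_lang_subset_lists[OF B]
    by (intro pad_zip_in_lists) auto
  then have "{pad_zip u v | u v. u \<in> A \<and> v \<in> B} = {pad_zip u v | u v. u \<in> A \<and> v \<in> B} \<inter> lists ?\<Delta>"
    by blast
  also have "\<dots> = {c \<in> lists ?\<Delta>. map fst c \<in> padded A} \<inter> {c \<in> lists ?\<Delta>. map snd c \<in> padded B} \<inter>
      lists (?\<Delta> - {(None, None)})"
    unfolding pad_zip_image_eq_padded by auto
  finally have eq: "{pad_zip u v | u v. u \<in> A \<and> v \<in> B} = \<dots>" .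
  have "regular_lang ?\<Delta> {c \<in> lists ?\<Delta>. map fst c \<in> padded A}"
    by (rule regular_lang_vimage_map[OF regular_lang_padded[OF A]]) auto
  moreover have "regular_lang ?\<Delta> {c \<in> lists ?\<Delta>. map snd c \<in> padded B}"
    by (rule regular_lang_vimage_map[OF regular_lang_padded[OF B]]) auto
  moreover have "regular_lang ?\<Delta> (lists (?\<Delta> - {(None, None)}))"
    by (rule regular_lang_lists) blast
  ultimately show ?thesis
    unfolding eq by (intro regular_lang_Int)
qed

lemma pad_zip_append: "length a = length b \<Longrightarrow> pad_zip (a @ c) (b @ d) = pad_zip a b @ pad_zip c d"
  by (induction a b rule: list_induct2) auto

lemma pad_zip_append_Nil: "pad_zip (a @ c) [] = pad_zip a [] @ pad_zip c []"
  by (induction a) auto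

lemma pad_zip_Nil_append: "pad_zip [] (b @ d) = pad_zip [] b @ pad_zip [] d"
  by (induction b) auto

lemma pad_zip_concat_map:
  assumes "\<And>\<sigma>. \<sigma> \<in> set s \<Longrightarrow> length (f \<sigma>) = k" and "\<And>\<tau>. \<tau> \<in> set t \<Longrightarrow> length (g \<tau>) = k"
  shows "pad_zip (concat (map f s)) (concat (map g t)) =
    concat (map (\<lambda>(a, b). pad_zip (case a of None \<Rightarrow> [] | Some \<sigma> \<Rightarrow> f \<sigma>) (case b of None \<Rightarrow> [] | Some \<tau> \<Rightarrow> g \<tau>))
      (pad_zip s t))"
  using assms
  by (induction s t rule: pad_zip.induct) (auto simp: pad_zip_append pad_zip_append_Nil pad_zip_Nil_append)

definition pad_pair :: "'x option \<Rightarrow> 'y option \<Rightarrow> ('x option \<times> 'y option) option" where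
  "pad_pair a b = (if a = None \<and> b = None then None else Some (a, b))"

definition swap_middle ::
  "('x option \<times> 'y option) option \<times> ('z option \<times> 'w option) option \<Rightarrow>
     ('x option \<times> 'z option) option \<times> ('y option \<times> 'w option) option" where
  "swap_middle = (\<lambda>(p, q). (pad_pair (Option.bind p fst) (Option.bind q fst),
                              pad_pair (Option.bind p snd) (Option.bind q snd)))"

lemma map_swap_middle_pad_zip:
  "map swap_middle (pad_zip (pad_zip u u') (pad_zip v v')) = pad_zip (pad_zip u v) (pad_zip u' v')"
  by (rule nth_equalityI) (auto simp: swap_middle_def nth_pad_zip pad_pair_def less_max_iff_disj)

section \<open>Substitution of blocks of constant length\<close>

lemma length_concat_map_const:
  assumes "\<And>\<sigma>. \<sigma> \<in> set t \<Longrightarrow> length (blk \<sigma>) = k"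
  shows "length (concat (map blk t)) = k * length t"
  using assms by (induction t) auto

lemma take_drop_concat_map_const:
  assumes "\<And>\<sigma>. \<sigma> \<in> set t \<Longrightarrow> length (blk \<sigma>) = k"
  shows "take (k * m) (concat (map blk t)) = concat (map blk (take m t))"
    and "drop (k * m) (concat (map blk t)) = concat (map blk (drop m t))"
proof -
  have split: "concat (map blk t) = concat (map blk (take m t)) @ concat (map blk (drop m t))"
    by (metis append_take_drop_id concat_append map_append)
  have "take (k * m) (concat (map blk t)) = concat (map blk (take m t)) \<and>
        drop (k * m) (concat (map blk t)) = concat (map blk (drop m t))"
  proof (cases "m \<le> length t")
    case True
    then have "length (concat (map blk (take m t))) = k * m"
      using assms by (subst length_concat_map_const[where k = k]) (auto dest: in_set_takeD)
    then show ?thesis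
      by (subst (1 2) split) simp
  next
    case False
    moreover have "length (concat (map blk t)) = k * length t"
      using assms by (rule length_concat_map_const)
    ultimately show ?thesis
      by simp
  qed
  then show "take (k * m) (concat (map blk t)) = concat (map blk (take m t))"
    and "drop (k * m) (concat (map blk t)) = concat (map blk (drop m t))"
    by simp_all
qed

lemma concat_map_const_length_inj:
  assumes "\<And>x. length (f x) = k" and "length xs = length ys" and "concat (map f xs) = concat (map f ys)"
  shows "map f xs = map f ys"
  using assms(2,3)
proof (induction xs ys rule: list_induct2)
  case (Cons x xs y ys)
  then show ?case
    using assms(1) by (simp add: append_eq_append_conv)
qed simp

text \<open>A left quotient of the image is determined by the left quotients of \<open>T\<close> by preimages of the
  complete blocks of \<open>x\<close>, together with the incomplete last block of \<open>x\<close>.\<close>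
lemma left_quotient_concat_map_image:
  fixes x
  assumes T: "T \<subseteq> lists \<Sigma>" and k: "0 < k"
    and blk: "\<And>t \<sigma>. t \<in> T \<Longrightarrow> \<sigma> \<in> set t \<Longrightarrow> length (blk \<sigma>) = k"
  defines "m \<equiv> length x div k"
  shows "left_quotient x ((\<lambda>t. concat (map blk t)) ` T) =
    {v. \<exists>Z \<in> (\<lambda>t0. left_quotient t0 T) ` {t0 \<in> lists \<Sigma>. concat (map blk t0) = take (k * m) x}.
        \<exists>t \<in> Z. drop (k * m) x @ v = concat (map blk t)}"
proof (intro equalityI subsetI)
  fix v assume "v \<in> left_quotient x ((\<lambda>t. concat (map blk t)) ` T)"
  then obtain t where t: "t \<in> T" and xv: "x @ v = concat (map blk t)"
    unfolding left_quotient_def by blast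
  have blk_t: "\<And>\<sigma>. \<sigma> \<in> set t \<Longrightarrow> length (blk \<sigma>) = k"
    using t blk by blast
  note take_drop = take_drop_concat_map_const[of t blk k m, OF blk_t]
  have km: "k * m \<le> length x"
    unfolding m_def by (simp add: times_div_less_eq_dividend)
  also have "\<dots> \<le> k * length t"
    using arg_cong[OF xv, of length] length_concat_map_const[of t blk k, OF blk_t] by simp
  finally have "m \<le> length t"
    using k by simp
  have "concat (map blk (take m t)) = take (k * m) x" "drop (k * m) x @ v = concat (map blk (drop m t))"
    using take_drop km xv by (metis take_append diff_is_0_eq take0 append_Nil2,
      metis drop_append diff_is_0_eq drop0)
  moreover have "take m t \<in> lists \<Sigma>" "drop m t \<in> left_quotient (take m t) T"
    using t T by (auto simp: left_quotient_def dest: in_set_takeD)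
  ultimately show "v \<in> {v. \<exists>Z \<in> (\<lambda>t0. left_quotient t0 T) ` {t0 \<in> lists \<Sigma>. concat (map blk t0) = take (k * m) x}.
        \<exists>t \<in> Z. drop (k * m) x @ v = concat (map blk t)}"
    by blast
next
  fix v assume "v \<in> {v. \<exists>Z \<in> (\<lambda>t0. left_quotient t0 T) ` {t0 \<in> lists \<Sigma>. concat (map blk t0) = take (k * m) x}.
        \<exists>t \<in> Z. drop (k * m) x @ v = concat (map blk t)}"
  then obtain t0 t where t0: "concat (map blk t0) = take (k * m) x" and t: "t0 @ t \<in> T"
    and rv: "drop (k * m) x @ v = concat (map blk t)"
    unfolding left_quotient_def by blast
  have "x @ v = concat (map blk (t0 @ t))"
    using t0 rv by (metis append_take_drop_id append_assoc concat_append map_append)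
  then show "v \<in> left_quotient x ((\<lambda>t. concat (map blk t)) ` T)"
    using t unfolding left_quotient_def by blast
qed

lemma regular_lang_concat_map_image:
  assumes reg: "regular_lang \<Sigma> T" and fin: "finite \<Gamma>" and k: "0 < k"
    and blk: "\<And>t \<sigma>. t \<in> T \<Longrightarrow> \<sigma> \<in> set t \<Longrightarrow> set (blk \<sigma>) \<subseteq> \<Gamma> \<and> length (blk \<sigma>) = k"
  shows "regular_lang \<Gamma> ((\<lambda>t. concat (map blk t)) ` T)"
proof (rule regular_langI_quotients)
  have T: "T \<subseteq> lists \<Sigma>"
    using reg by (rule regular_lang_subset_lists)
  show "(\<lambda>t. concat (map blk t)) ` T \<subseteq> lists \<Gamma>"
    using blk by fastforce
  define \<Phi> where "\<Phi> = (\<lambda>(Zs, r). {v. \<exists>Z\<in>Zs. \<exists>t\<in>Z. r @ v = concat (map blk t)})"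
  let ?R = "Pow ((\<lambda>w. left_quotient w T) ` lists \<Sigma>) \<times> {r. set r \<subseteq> \<Gamma> \<and> length r \<le> k}"
  have "left_quotient x ((\<lambda>t. concat (map blk t)) ` T) \<in> \<Phi> ` ?R" if x: "x \<in> lists \<Gamma>" for x
  proof (rule image_eqI)
    let ?m = "length x div k"
    show "left_quotient x ((\<lambda>t. concat (map blk t)) ` T) =
      \<Phi> ((\<lambda>t0. left_quotient t0 T) ` {t0 \<in> lists \<Sigma>. concat (map blk t0) = take (k * ?m) x}, drop (k * ?m) x)"
      unfolding \<Phi>_def using left_quotient_concat_map_image[OF T k, of blk x] blk by blast
    have "length (drop (k * ?m) x) \<le> k"
      using k by (simp add: minus_mult_div_eq_mod)
    then show "((\<lambda>t0. left_quotient t0 T) ` {t0 \<in> lists \<Sigma>. concat (map blk t0) = take (k * ?m) x},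
        drop (k * ?m) x) \<in> ?R"
      using x by (auto dest: in_set_dropD)
  qed
  moreover have "finite (\<Phi> ` ?R)"
    using finite_left_quotients[OF reg] finite_lists_length_le[OF fin] by simp
  ultimately show "finite ((\<lambda>x. left_quotient x ((\<lambda>t. concat (map blk t)) ` T)) ` lists \<Gamma>)"
    by (meson finite_subset image_subsetI)
qed

lemma finite_sym_gens: "finite A \<Longrightarrow> finite (sym_gens G A)"
  by (simp add: sym_gens_def)

lemma finite_bounded_length_image:
  assumes "finite S" and "L \<subseteq> lists S"
  shows "finite {f w | w. w \<in> L \<and> length w \<le> n}"
proof -
  have "{f w | w. w \<in> L \<and> length w \<le> n} \<subseteq> f ` {xs. set xs \<subseteq> S \<and> length xs \<le> n}"
    using assms(2) by (auto simp: in_lists_conv_set)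
  then show ?thesis
    using finite_lists_length_le[OF assms(1)] by (rule finite_subset[OF _ finite_imageI])
qed

context group
begin

lemma sym_gens_subset_carrier: "A \<subseteq> carrier G \<Longrightarrow> sym_gens G A \<subseteq> carrier G"
  unfolding sym_gens_def by auto

lemma inv_in_sym_gens: "A \<subseteq> carrier G \<Longrightarrow> x \<in> sym_gens G A \<Longrightarrow> inv x \<in> sym_gens G A"
  unfolding sym_gens_def by (auto simp: subsetD)

lemma eval_word_closed: "set w \<subseteq> carrier G \<Longrightarrow> eval_word G w \<in> carrier G"
  by (induction w) auto

lemma eval_word_append:
  "set u \<subseteq> carrier G \<Longrightarrow> set v \<subseteq> carrier G \<Longrightarrow> eval_word G (u @ v) = eval_word G u \<otimes> eval_word G v"
  by (induction u) (auto simp: eval_word_closed m_assoc)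

lemma ex_word_if_in_generate:
  assumes "A \<subseteq> carrier G" and "x \<in> generate G A"
  shows "\<exists>w \<in> lists (sym_gens G A). eval_word G w = x"
  using assms(2)
proof (induction rule: generate.induct)
  case one
  show ?case
    by (intro bexI[of _ "[]"]) auto
next
  case (incl h)
  then show ?case
    using assms(1) by (intro bexI[of _ "[h]"]) (auto simp: sym_gens_def)
next
  case (inv h)
  then show ?case
    using assms(1) by (intro bexI[of _ "[inv h]"]) (auto simp: sym_gens_def)
next
  case (eng h1 h2)
  then obtain w1 w2 where "w1 \<in> lists (sym_gens G A)" "eval_word G w1 = h1"
    "w2 \<in> lists (sym_gens G A)" "eval_word G w2 = h2"
    by blast
  moreover have "set w1 \<subseteq> carrier G" "set w2 \<subseteq> carrier G"
    using calculation sym_gens_subset_carrier[OF assms(1)] by auto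
  ultimately show ?case
    by (intro bexI[of _ "w1 @ w2"]) (auto simp: eval_word_append)
qed

lemma eval_word_in_generate:
  assumes "A \<subseteq> carrier G" and "w \<in> lists (sym_gens G A)"
  shows "eval_word G w \<in> generate G A"
  using assms(2)
proof (induction w)
  case Nil
  then show ?case
    by (simp add: generate.one)
next
  case (Cons x w)
  then have "x \<in> generate G A"
    by (auto simp: sym_gens_def intro: generate.incl generate.inv)
  then show ?case
    using Cons by (auto intro: generate.eng)
qed

lemma word_length_le:
  "w \<in> lists (sym_gens G A) \<Longrightarrow> eval_word G w = g \<Longrightarrow> word_length G A g \<le> length w"
  unfolding word_length_def by (rule Least_le) blast

lemma ex_shortest_word:
  assumes "fin_gen_set G A" and "g \<in> carrier G"
  obtains w where "w \<in> lists (sym_gens G A)" "length w = word_length G A g" "eval_word G w = g"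
proof -
  have "\<exists>w \<in> lists (sym_gens G A). eval_word G w = g"
    using assms ex_word_if_in_generate unfolding fin_gen_set_def by blast
  then have "\<exists>n. \<exists>w \<in> lists (sym_gens G A). length w = n \<and> eval_word G w = g"
    by blast
  from LeastI_ex[OF this] show ?thesis
    using that unfolding word_length_def by blast
qed

end

lemma caut_fun_ge:
  assumes "finite S" and "L \<subseteq> lists S" and "w \<in> L" and "length w \<le> n"
  shows "real (word_dist G A (eval_word G w) (\<psi> w)) \<le> caut_fun G A L \<psi> n"
  unfolding caut_fun_def
  using assms finite_bounded_length_image[OF assms(1,2)] by (intro Max_ge) auto

lemma caut_fun_nonneg:
  assumes "finite S" and "L \<subseteq> lists S"
  shows "0 \<le> caut_fun G A L \<psi> n"
  unfolding caut_fun_def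
  using finite_bounded_length_image[OF assms] by (intro Max_ge) auto

lemma caut_fun_le:
  assumes "finite S" and "L \<subseteq> lists S" and "0 \<le> c"
    and "\<And>w. w \<in> L \<Longrightarrow> length w \<le> n \<Longrightarrow> real (word_dist G A (eval_word G w) (\<psi> w)) \<le> c"
  shows "caut_fun G A L \<psi> n \<le> c"
  unfolding caut_fun_def
  using assms finite_bounded_length_image[OF assms(1,2)] by (intro Max.boundedI) auto

locale cayley_automatic = group G for G :: "('a, 'm) monoid_scheme" (structure) +
  fixes A :: "'a set" and L :: "'a list set" and \<psi> :: "'a list \<Rightarrow> 'a"
  assumes fin_gen: "fin_gen_set G A" and rep: "cayley_aut_rep G A L \<psi>"
begin

abbreviation S :: "'a set" where "S \<equiv> sym_gens G A"

lemma gens_subset_carrier: "A \<subseteq> carrier G"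
  and finite_gens: "finite A"
  and generate_gens: "generate G A = carrier G"
  using fin_gen unfolding fin_gen_set_def by auto

lemma finite_S: "finite S"
  using finite_gens by (rule finite_sym_gens)

lemma S_subset_carrier: "S \<subseteq> carrier G"
  using gens_subset_carrier by (rule sym_gens_subset_carrier)

lemma regular_L: "regular_lang S L"
  and bij_rep: "bij_betw \<psi> L (carrier G)"
  and right_mult_recognizable:
    "a \<in> A \<Longrightarrow> fa_recognizable S {(inv_into L \<psi> g, inv_into L \<psi> (g \<otimes> a)) | g. g \<in> carrier G}"
  using rep unfolding cayley_aut_rep_def by auto

lemma L_subset_lists: "L \<subseteq> lists S"
  using regular_L by (rule regular_lang_subset_lists)

lemma rep_closed: "u \<in> L \<Longrightarrow> \<psi> u \<in> carrier G"
  using bij_rep by (rule bij_betw_apply)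

lemma rep_inj: "u \<in> L \<Longrightarrow> u' \<in> L \<Longrightarrow> \<psi> u = \<psi> u' \<Longrightarrow> u = u'"
  using bij_rep unfolding bij_betw_def by (metis inj_onD)

lemma inv_rep_in_L: "g \<in> carrier G \<Longrightarrow> inv_into L \<psi> g \<in> L"
  using bij_rep by (metis bij_betw_def inv_into_into)

lemma rep_inv_rep: "g \<in> carrier G \<Longrightarrow> \<psi> (inv_into L \<psi> g) = g"
  using bij_rep by (metis bij_betw_def f_inv_into_f)

lemma eval_word_L_closed: "u \<in> L \<Longrightarrow> eval_word G u \<in> carrier G"
  using L_subset_lists S_subset_carrier by (intro eval_word_closed) auto

lemma L_unique_if_S_trivial:
  assumes "\<forall>x\<in>S. x = \<one>" and "u \<in> L" and "u' \<in> L"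
  shows "u = u'"
proof -
  have "g = \<one>" if "g \<in> carrier G" for g
  proof -
    have "g \<in> generate G A"
      using generate_gens that by simp
    then obtain w where w: "w \<in> lists S" "eval_word G w = g"
      using ex_word_if_in_generate[OF gens_subset_carrier] by blast
    have "set w \<subseteq> {\<one>}"
      using w(1) assms(1) by auto
    then have "eval_word G w = \<one>"
      by (induction w) auto
    then show ?thesis
      using w(2) by simp
  qed
  then have "\<psi> u = \<psi> u'"
    using rep_closed[OF assms(2)] rep_closed[OF assms(3)] by metis
  then show ?thesis
    using rep_inj[OF assms(2,3)] by blast
qed

definition right_mult_convs :: "'a \<Rightarrow> ('a option \<times> 'a option) list set" where
  "right_mult_convs e = {pad_zip (inv_into L \<psi> g) (inv_into L \<psi> (g \<otimes> e)) | g. g \<in> carrier G}"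

lemma regular_right_mult_convs:
  assumes "e \<in> insert \<one> A"
  shows "regular_lang (insert None (Some ` S) \<times> insert None (Some ` S)) (right_mult_convs e)"
proof (cases "e = \<one>")
  case True
  have "pad_zip u u = concat (map (\<lambda>x. [(Some x, Some x)]) u)" for u :: "'a list"
    by (induction u) auto
  then have "(\<lambda>u. pad_zip u u) ` L = (\<lambda>t. concat (map (\<lambda>x. [(Some x, Some x)]) t)) ` L"
    by simp
  moreover have "{pad_zip (inv_into L \<psi> g) (inv_into L \<psi> (g \<otimes> e)) | g. g \<in> carrier G} =
      (\<lambda>u. pad_zip u u) ` inv_into L \<psi> ` carrier G"
    using True by force
  moreover have "inv_into L \<psi> ` carrier G = L"
    using bij_betw_inv_into[OF bij_rep] by (rule bij_betw_imp_surj_on)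
  ultimately have "right_mult_convs e = (\<lambda>t. concat (map (\<lambda>x. [(Some x, Some x)]) t)) ` L"
    unfolding right_mult_convs_def by simp
  moreover have "regular_lang (insert None (Some ` S) \<times> insert None (Some ` S))
      ((\<lambda>t. concat (map (\<lambda>x. [(Some x, Some x)]) t)) ` L)"
    using L_subset_lists finite_S
    by (intro regular_lang_concat_map_image[OF regular_L, where k = 1]) auto
  ultimately show ?thesis
    by simp
next
  case False
  then show ?thesis
    using right_mult_recognizable[of e] assms
    unfolding fa_recognizable_def conv_eq_pad_zip right_mult_convs_def
    by (simp add: image_image setcompr_eq_image)
qed

definition pad_letter :: 'a where
  "pad_letter = (if \<exists>x\<in>S. x \<noteq> \<one> then SOME x. x \<in> S \<and> x \<noteq> \<one> else \<one>)"

lemma pad_letter_nontrivial: "\<exists>x\<in>S. x \<noteq> \<one> \<Longrightarrow> pad_letter \<in> S \<and> pad_letter \<noteq> \<one>"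
  unfolding pad_letter_def using someI_ex[of "\<lambda>x. x \<in> S \<and> x \<noteq> \<one>"] by auto

lemma pad_letter_in_S: "pad_letter \<in> insert \<one> S" "inv pad_letter \<in> insert \<one> S"
  using pad_letter_nontrivial inv_in_sym_gens[OF gens_subset_carrier]
  by (auto simp: pad_letter_def)

lemma pad_letter_closed: "pad_letter \<in> carrier G"
  using pad_letter_in_S(1) S_subset_carrier by auto

text \<open>The padding symbol is coded as \<open>[s, s\<inverse>]\<close> for some generator \<open>s \<noteq> \<one>\<close>: every code then
  evaluates to the symbol it codes, and distinct symbols get distinct codes. If there is no such
  \<open>s\<close>, the group is trivial and \<open>L\<close> consists of a single word.\<close>
definition letter_code :: "'a option \<Rightarrow> 'a list" where
  "letter_code c = (case c of Some x \<Rightarrow> [x, \<one>] | None \<Rightarrow> [pad_letter, inv pad_letter])"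

lemma length_letter_code [simp]: "length (letter_code c) = 2"
  by (simp add: letter_code_def split: option.split)

lemma set_letter_code: "c \<in> insert None (Some ` S) \<Longrightarrow> set (letter_code c) \<subseteq> insert \<one> S"
  using pad_letter_in_S by (auto simp: letter_code_def)

lemma eval_letter_code:
  "c \<in> insert None (Some ` carrier G) \<Longrightarrow> eval_word G (letter_code c) = (case c of None \<Rightarrow> \<one> | Some x \<Rightarrow> x)"
  using pad_letter_closed by (auto simp: letter_code_def)

lemma padded_letter_codes_inj:
  assumes "u \<in> L" and "u' \<in> L"
    and "map letter_code (map Some u @ replicate m None) = map letter_code (map Some u' @ replicate m' None)"
  shows "u = u'"
proof (cases "\<exists>x\<in>S. x \<noteq> \<one>")
  case True
  then have "inv pad_letter \<noteq> \<one>"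
    using pad_letter_nontrivial pad_letter_closed by auto
  then have "inj letter_code"
    by (auto simp: inj_def letter_code_def split: option.splits)
  then have "map Some u @ replicate m None = map Some u' @ replicate m' None"
    using assms(3) by (simp only: inj_map_eq_map)
  then show ?thesis
    by (rule padded_word_inj)
next
  case False
  then show ?thesis
    using L_unique_if_S_trivial assms(1,2) by blast
qed

end

section \<open>Direct products\<close>

locale cayley_automatic_pair =
  G1: cayley_automatic G1 A1 L1 \<psi>1 + G2: cayley_automatic G2 A2 L2 \<psi>2
  for G1 :: "('a, 'm) monoid_scheme" and A1 L1 \<psi>1
    and G2 :: "('b, 'n) monoid_scheme" and A2 L2 \<psi>2
begin

abbreviation P :: "('a \<times> 'b) monoid" where "P \<equiv> G1 \<times>\<times> G2"

lemma group_P: "group P"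
  by (rule DirProd_group) unfold_locales

text \<open>\<open>(\<one>, \<one>)\<close> is a generator because it is the filler letter of symbol codes.\<close>
definition prod_gens :: "('a \<times> 'b) set" where
  "prod_gens = insert (\<one>\<^bsub>G1\<^esub>, \<one>\<^bsub>G2\<^esub>) ((\<lambda>a. (a, \<one>\<^bsub>G2\<^esub>)) ` A1 \<union> (\<lambda>b. (\<one>\<^bsub>G1\<^esub>, b)) ` A2)"

abbreviation Sp :: "('a \<times> 'b) set" where "Sp \<equiv> sym_gens P prod_gens"

lemma prod_gens_subset_carrier: "prod_gens \<subseteq> carrier P"
  using G1.gens_subset_carrier G2.gens_subset_carrier by (auto simp: prod_gens_def)

lemma finite_Sp: "finite Sp"
  using G1.finite_gens G2.finite_gens by (simp add: prod_gens_def finite_sym_gens)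

lemma Sp_subset_carrier: "Sp \<subseteq> carrier P"
  using group.sym_gens_subset_carrier[OF group_P prod_gens_subset_carrier] .

lemma left_in_Sp:
  assumes "x \<in> insert \<one>\<^bsub>G1\<^esub> G1.S"
  shows "(x, \<one>\<^bsub>G2\<^esub>) \<in> Sp"
proof -
  consider "x \<in> insert \<one>\<^bsub>G1\<^esub> A1" | a where "a \<in> A1" "x = inv\<^bsub>G1\<^esub> a"
    using assms unfolding sym_gens_def by blast
  then show ?thesis
  proof cases
    case 1
    then show ?thesis
      by (auto simp: sym_gens_def prod_gens_def)
  next
    case 2
    then have "(x, \<one>\<^bsub>G2\<^esub>) = inv\<^bsub>P\<^esub> (a, \<one>\<^bsub>G2\<^esub>)"
      using G1.gens_subset_carrier by (auto simp: inv_DirProd[OF G1.is_group G2.is_group])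
    then show ?thesis
      using 2 by (auto simp: sym_gens_def prod_gens_def)
  qed
qed

lemma right_in_Sp:
  assumes "y \<in> insert \<one>\<^bsub>G2\<^esub> G2.S"
  shows "(\<one>\<^bsub>G1\<^esub>, y) \<in> Sp"
proof -
  consider "y \<in> insert \<one>\<^bsub>G2\<^esub> A2" | b where "b \<in> A2" "y = inv\<^bsub>G2\<^esub> b"
    using assms unfolding sym_gens_def by blast
  then show ?thesis
  proof cases
    case 1
    then show ?thesis
      by (auto simp: sym_gens_def prod_gens_def)
  next
    case 2
    then have "(\<one>\<^bsub>G1\<^esub>, y) = inv\<^bsub>P\<^esub> (\<one>\<^bsub>G1\<^esub>, b)"
      using G2.gens_subset_carrier by (auto simp: inv_DirProd[OF G1.is_group G2.is_group])
    then show ?thesis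
      using 2 by (auto simp: sym_gens_def prod_gens_def)
  qed
qed

definition symbol_code :: "'a option \<times> 'b option \<Rightarrow> ('a \<times> 'b) list" where
  "symbol_code c = map (\<lambda>x. (x, \<one>\<^bsub>G2\<^esub>)) (G1.letter_code (fst c)) @ map (\<lambda>y. (\<one>\<^bsub>G1\<^esub>, y)) (G2.letter_code (snd c))"

lemma length_symbol_code [simp]: "length (symbol_code c) = 4"
  by (simp add: symbol_code_def)

lemma set_symbol_code:
  "c \<in> insert None (Some ` G1.S) \<times> insert None (Some ` G2.S) \<Longrightarrow> set (symbol_code c) \<subseteq> Sp"
  using G1.set_letter_code[of "fst c"] G2.set_letter_code[of "snd c"] left_in_Sp right_in_Sp
  by (force simp: symbol_code_def)

lemma symbol_code_eq_iff:
  "symbol_code c = symbol_code c' \<longleftrightarrow>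
     G1.letter_code (fst c) = G1.letter_code (fst c') \<and> G2.letter_code (snd c) = G2.letter_code (snd c')"
  by (auto simp: symbol_code_def append_eq_append_conv inj_map_eq_map inj_on_def)

lemma eval_word_map_left:
  "set w \<subseteq> carrier G1 \<Longrightarrow> eval_word P (map (\<lambda>x. (x, \<one>\<^bsub>G2\<^esub>)) w) = (eval_word G1 w, \<one>\<^bsub>G2\<^esub>)"
  by (induction w) auto

lemma eval_word_map_right:
  "set w \<subseteq> carrier G2 \<Longrightarrow> eval_word P (map (\<lambda>y. (\<one>\<^bsub>G1\<^esub>, y)) w) = (\<one>\<^bsub>G1\<^esub>, eval_word G2 w)"
  by (induction w) auto

lemma eval_symbol_code:
  assumes "c \<in> insert None (Some ` carrier G1) \<times> insert None (Some ` carrier G2)"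
  shows "eval_word P (symbol_code c) =
    (case fst c of None \<Rightarrow> \<one>\<^bsub>G1\<^esub> | Some x \<Rightarrow> x, case snd c of None \<Rightarrow> \<one>\<^bsub>G2\<^esub> | Some y \<Rightarrow> y)"
proof -
  let ?l = "G1.letter_code (fst c)" and ?r = "G2.letter_code (snd c)"
  have l: "set ?l \<subseteq> carrier G1" and r: "set ?r \<subseteq> carrier G2"
    using assms G1.pad_letter_closed G2.pad_letter_closed
    by (auto simp: G1.letter_code_def G2.letter_code_def)
  then have "set (map (\<lambda>x. (x, \<one>\<^bsub>G2\<^esub>)) ?l) \<subseteq> carrier P" "set (map (\<lambda>y. (\<one>\<^bsub>G1\<^esub>, y)) ?r) \<subseteq> carrier P"
    by auto
  then have "eval_word P (symbol_code c) =
      eval_word P (map (\<lambda>x. (x, \<one>\<^bsub>G2\<^esub>)) ?l) \<otimes>\<^bsub>P\<^esub> eval_word P (map (\<lambda>y. (\<one>\<^bsub>G1\<^esub>, y)) ?r)"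
    unfolding symbol_code_def by (rule group.eval_word_append[OF group_P])
  also have "\<dots> = (eval_word G1 ?l, eval_word G2 ?r)"
    using l r G1.eval_word_closed G2.eval_word_closed by (simp add: eval_word_map_left eval_word_map_right)
  finally show ?thesis
    using assms G1.eval_letter_code[of "fst c"] G2.eval_letter_code[of "snd c"] by auto
qed

definition prod_word :: "'a list \<Rightarrow> 'b list \<Rightarrow> ('a \<times> 'b) list" where
  "prod_word u v = concat (map symbol_code (pad_zip u v))"

lemma length_prod_word: "length (prod_word u v) = 4 * max (length u) (length v)"
  unfolding prod_word_def by (subst length_concat_map_const[where k = 4]) auto

lemma prod_word_in_lists:
  assumes "u \<in> lists G1.S" and "v \<in> lists G2.S"
  shows "prod_word u v \<in> lists Sp"
proof -
  have "set (symbol_code c) \<subseteq> Sp" if "c \<in> set (pad_zip u v)" for c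
    using that pad_zip_in_lists[OF assms] set_symbol_code by (meson in_listsD)
  then show ?thesis
    unfolding prod_word_def by (auto simp: in_lists_conv_set)
qed

lemma eval_prod_word:
  assumes "u \<in> lists G1.S" and "v \<in> lists G2.S"
  shows "eval_word P (prod_word u v) = (eval_word G1 u, eval_word G2 v)"
proof -
  note S_carrier = G1.S_subset_carrier G2.S_subset_carrier
  have step: "eval_word P (symbol_code c @ prod_word xs ys) =
      eval_word P (symbol_code c) \<otimes>\<^bsub>P\<^esub> eval_word P (prod_word xs ys)"
    if "c \<in> insert None (Some ` G1.S) \<times> insert None (Some ` G2.S)" "xs \<in> lists G1.S" "ys \<in> lists G2.S"
    for c xs ys
  proof (rule group.eval_word_append[OF group_P])
    show "set (symbol_code c) \<subseteq> carrier P"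
      using set_symbol_code[OF that(1)] Sp_subset_carrier by blast
    show "set (prod_word xs ys) \<subseteq> carrier P"
      using prod_word_in_lists[OF that(2,3)] Sp_subset_carrier by (auto simp: lists_eq_set)
  qed
  show ?thesis
    using assms
  proof (induction u v rule: pad_zip.induct)
    case (2 x xs)
    have "x \<in> carrier G1" "eval_word G1 xs \<in> carrier G1"
      using 2(2) S_carrier by (auto intro!: G1.eval_word_closed)
    then show ?case
      using 2 step[of "(Some x, None)" xs "[]"] eval_symbol_code[of "(Some x, None)"]
      by (simp add: prod_word_def)
  next
    case (3 y ys)
    have "y \<in> carrier G2" "eval_word G2 ys \<in> carrier G2"
      using 3(3) S_carrier by (auto intro!: G2.eval_word_closed)
    then show ?case
      using 3 step[of "(None, Some y)" "[]" ys] eval_symbol_code[of "(None, Some y)"]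
      by (simp add: prod_word_def)
  next
    case (4 x xs y ys)
    have "x \<in> carrier G1" "eval_word G1 xs \<in> carrier G1" "y \<in> carrier G2" "eval_word G2 ys \<in> carrier G2"
      using 4(2,3) S_carrier by (auto intro!: G1.eval_word_closed G2.eval_word_closed)
    then show ?case
      using 4 step[of "(Some x, Some y)" xs ys] eval_symbol_code[of "(Some x, Some y)"]
      by (simp add: prod_word_def)
  qed (simp add: prod_word_def)
qed

lemma prod_word_inj:
  assumes "u \<in> L1" "u' \<in> L1" "v \<in> L2" "v' \<in> L2" and eq: "prod_word u v = prod_word u' v'"
  shows "u = u' \<and> v = v'"
proof -
  have "length (pad_zip u v) = length (pad_zip u' v')"
    using arg_cong[OF eq, of length] by (simp add: length_prod_word)
  moreover have "map symbol_code (pad_zip u v) = map symbol_code (pad_zip u' v')"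
    using eq calculation unfolding prod_word_def by (intro concat_map_const_length_inj[where k = 4]) auto
  ultimately have "symbol_code (pad_zip u v ! i) = symbol_code (pad_zip u' v' ! i)"
    if "i < length (pad_zip u v)" for i
    using that by (metis nth_map)
  with \<open>length (pad_zip u v) = length (pad_zip u' v')\<close>
  have "map (G1.letter_code \<circ> fst) (pad_zip u v) = map (G1.letter_code \<circ> fst) (pad_zip u' v')"
    and "map (G2.letter_code \<circ> snd) (pad_zip u v) = map (G2.letter_code \<circ> snd) (pad_zip u' v')"
    by (auto intro!: nth_equalityI simp: symbol_code_eq_iff)
  then have "map G1.letter_code (map Some u @ replicate (max (length u) (length v) - length u) None) =
      map G1.letter_code (map Some u' @ replicate (max (length u') (length v') - length u') None)"
    and "map G2.letter_code (map Some v @ replicate (max (length u) (length v) - length v) None) =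
      map G2.letter_code (map Some v' @ replicate (max (length u') (length v') - length v') None)"
    by (simp_all only: map_map[symmetric] map_fst_pad_zip map_snd_pad_zip)
  then show ?thesis
    using G1.padded_letter_codes_inj G2.padded_letter_codes_inj assms(1-4) by blast
qed

definition prod_lang :: "('a \<times> 'b) list set" where
  "prod_lang = case_prod prod_word ` (L1 \<times> L2)"

definition prod_rep :: "('a \<times> 'b) list \<Rightarrow> 'a \<times> 'b" where
  "prod_rep = map_prod \<psi>1 \<psi>2 \<circ> inv_into (L1 \<times> L2) (case_prod prod_word)"

lemma inj_on_prod_word: "inj_on (case_prod prod_word) (L1 \<times> L2)"
  using prod_word_inj by (auto intro: inj_onI)

lemma prod_rep_prod_word: "u \<in> L1 \<Longrightarrow> v \<in> L2 \<Longrightarrow> prod_rep (prod_word u v) = (\<psi>1 u, \<psi>2 v)"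
  using inv_into_f_f[OF inj_on_prod_word, of "(u, v)"] by (simp add: prod_rep_def)

lemma bij_prod_rep: "bij_betw prod_rep prod_lang (carrier P)"
  unfolding prod_rep_def prod_lang_def carrier_DirProd
  using bij_betw_inv_into[OF inj_on_imp_bij_betw[OF inj_on_prod_word]]
    bij_betw_map_prod[OF G1.bij_rep G2.bij_rep]
  by (rule bij_betw_trans)

lemma inv_prod_rep:
  assumes "g1 \<in> carrier G1" and "g2 \<in> carrier G2"
  shows "inv_into prod_lang prod_rep (g1, g2) = prod_word (inv_into L1 \<psi>1 g1) (inv_into L2 \<psi>2 g2)"
proof (rule inv_into_f_eq)
  show "inj_on prod_rep prod_lang"
    using bij_prod_rep by (rule bij_betw_imp_inj_on)
  show "prod_word (inv_into L1 \<psi>1 g1) (inv_into L2 \<psi>2 g2) \<in> prod_lang"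
    using assms G1.inv_rep_in_L G2.inv_rep_in_L by (auto simp: prod_lang_def)
  show "prod_rep (prod_word (inv_into L1 \<psi>1 g1) (inv_into L2 \<psi>2 g2)) = (g1, g2)"
    using assms by (simp add: prod_rep_prod_word G1.inv_rep_in_L G2.inv_rep_in_L G1.rep_inv_rep G2.rep_inv_rep)
qed

lemma regular_prod_lang: "regular_lang Sp prod_lang"
proof -
  have "prod_lang = (\<lambda>t. concat (map symbol_code t)) ` {pad_zip u v | u v. u \<in> L1 \<and> v \<in> L2}"
    unfolding prod_lang_def prod_word_def by fastforce
  also have "regular_lang Sp \<dots>"
  proof (rule regular_lang_concat_map_image[OF regular_lang_pad_zip[OF G1.regular_L G2.regular_L] finite_Sp])
    fix t c assume "t \<in> {pad_zip u v | u v. u \<in> L1 \<and> v \<in> L2}" and c: "c \<in> set t"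
    then obtain u v where "t = pad_zip u v" "u \<in> lists G1.S" "v \<in> lists G2.S"
      using G1.L_subset_lists G2.L_subset_lists by blast
    then have "c \<in> insert None (Some ` G1.S) \<times> insert None (Some ` G2.S)"
      using c pad_zip_in_lists by (metis in_listsD)
    then show "set (symbol_code c) \<subseteq> Sp \<and> length (symbol_code c) = 4"
      using set_symbol_code by simp
  qed simp
  finally show ?thesis .
qed

definition symbol_pair_code ::
  "('a option \<times> 'b option) option \<times> ('a option \<times> 'b option) option \<Rightarrow> (('a \<times> 'b) option \<times> ('a \<times> 'b) option) list"
  where "symbol_pair_code =
    (\<lambda>(a, b). pad_zip (case a of None \<Rightarrow> [] | Some c \<Rightarrow> symbol_code c) (case b of None \<Rightarrow> [] | Some c \<Rightarrow> symbol_code c))"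

lemma pad_zip_prod_word:
  "pad_zip (prod_word u v) (prod_word u' v') =
     concat (map (symbol_pair_code \<circ> swap_middle) (pad_zip (pad_zip u u') (pad_zip v v')))"
proof -
  have "pad_zip (prod_word u v) (prod_word u' v') =
      concat (map symbol_pair_code (pad_zip (pad_zip u v) (pad_zip u' v')))"
    unfolding prod_word_def symbol_pair_code_def by (rule pad_zip_concat_map[where k = 4]) simp_all
  also have "\<dots> = concat (map symbol_pair_code (map swap_middle (pad_zip (pad_zip u u') (pad_zip v v'))))"
    by (simp only: map_swap_middle_pad_zip)
  finally show ?thesis
    by simp
qed

lemma symbol_pair_code_swap_middle:
  assumes "c \<in> set (pad_zip (pad_zip u u') (pad_zip v v'))"
    and "u \<in> lists G1.S" "u' \<in> lists G1.S" "v \<in> lists G2.S" "v' \<in> lists G2.S"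
  shows "set (symbol_pair_code (swap_middle c)) \<subseteq> insert None (Some ` Sp) \<times> insert None (Some ` Sp)
    \<and> length (symbol_pair_code (swap_middle c)) = 4"
proof -
  let ?\<Delta> = "insert None (Some ` G1.S) \<times> insert None (Some ` G2.S)"
  obtain a b where ab: "swap_middle c = (a, b)"
    by (cases "swap_middle c")
  have "(a, b) \<in> set (map swap_middle (pad_zip (pad_zip u u') (pad_zip v v')))"
    using assms(1) ab by (metis image_eqI list.set_map)
  then have "(a, b) \<in> insert None (Some ` set (pad_zip u v)) \<times> insert None (Some ` set (pad_zip u' v')) - {(None, None)}"
    using set_pad_zip unfolding map_swap_middle_pad_zip by blast
  moreover have "set (pad_zip u v) \<subseteq> ?\<Delta>" "set (pad_zip u' v') \<subseteq> ?\<Delta>"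
    using pad_zip_in_lists[OF assms(2,4)] pad_zip_in_lists[OF assms(3,5)] by (simp_all add: lists_eq_set)
  ultimately have "(a, b) \<noteq> (None, None)" "a \<in> insert None (Some ` ?\<Delta>)" "b \<in> insert None (Some ` ?\<Delta>)"
    by blast+
  moreover define x y where "x = (case a of None \<Rightarrow> [] | Some c \<Rightarrow> symbol_code c)"
    and "y = (case b of None \<Rightarrow> [] | Some c \<Rightarrow> symbol_code c)"
  ultimately have "set x \<subseteq> Sp" "set y \<subseteq> Sp" "length (pad_zip x y) = 4"
    using set_symbol_code by (auto split: option.split)
  moreover have "symbol_pair_code (swap_middle c) = pad_zip x y"
    unfolding ab symbol_pair_code_def x_def y_def by simp
  moreover have "set (pad_zip x y) \<subseteq> insert None (Some ` Sp) \<times> insert None (Some ` Sp)"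
    using set_pad_zip[of x y] calculation(1,2)
    by (meson Diff_subset Sigma_mono image_mono insert_mono subset_trans)
  ultimately show ?thesis
    by simp
qed

lemma conv_right_mult_prod:
  assumes "e1 \<in> carrier G1" and "e2 \<in> carrier G2"
  shows "(\<lambda>(x, y). conv x y) `
      {(inv_into prod_lang prod_rep g, inv_into prod_lang prod_rep (g \<otimes>\<^bsub>P\<^esub> (e1, e2))) | g. g \<in> carrier P} =
    (\<lambda>t. concat (map (symbol_pair_code \<circ> swap_middle) t)) `
      {pad_zip c d | c d. c \<in> G1.right_mult_convs e1 \<and> d \<in> G2.right_mult_convs e2}"
proof -
  let ?conv1 = "\<lambda>g. pad_zip (inv_into L1 \<psi>1 g) (inv_into L1 \<psi>1 (g \<otimes>\<^bsub>G1\<^esub> e1))"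
  let ?conv2 = "\<lambda>g. pad_zip (inv_into L2 \<psi>2 g) (inv_into L2 \<psi>2 (g \<otimes>\<^bsub>G2\<^esub> e2))"
  have "conv (inv_into prod_lang prod_rep (g1, g2)) (inv_into prod_lang prod_rep ((g1, g2) \<otimes>\<^bsub>P\<^esub> (e1, e2))) =
      concat (map (symbol_pair_code \<circ> swap_middle) (pad_zip (?conv1 g1) (?conv2 g2)))"
    if "g1 \<in> carrier G1" "g2 \<in> carrier G2" for g1 g2
    using that assms by (simp add: conv_eq_pad_zip inv_prod_rep pad_zip_prod_word)
  then show ?thesis
    unfolding G1.right_mult_convs_def G2.right_mult_convs_def by force
qed

lemma regular_right_mult_prod_blocks:
  assumes "e1 \<in> insert \<one>\<^bsub>G1\<^esub> A1" and "e2 \<in> insert \<one>\<^bsub>G2\<^esub> A2"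
  shows "regular_lang (insert None (Some ` Sp) \<times> insert None (Some ` Sp))
    ((\<lambda>t. concat (map (symbol_pair_code \<circ> swap_middle) t)) `
      {pad_zip c d | c d. c \<in> G1.right_mult_convs e1 \<and> d \<in> G2.right_mult_convs e2})"
proof (rule regular_lang_concat_map_image)
  show "regular_lang (insert None (Some ` (insert None (Some ` G1.S) \<times> insert None (Some ` G1.S))) \<times>
      insert None (Some ` (insert None (Some ` G2.S) \<times> insert None (Some ` G2.S))))
    {pad_zip c d | c d. c \<in> G1.right_mult_convs e1 \<and> d \<in> G2.right_mult_convs e2}"
    using assms by (intro regular_lang_pad_zip G1.regular_right_mult_convs G2.regular_right_mult_convs)
  show "finite (insert None (Some ` Sp) \<times> insert None (Some ` Sp))"
    using finite_Sp by simp
  have e_closed: "e1 \<in> carrier G1" "e2 \<in> carrier G2"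
    using assms G1.gens_subset_carrier G2.gens_subset_carrier by auto
  fix t c assume "t \<in> {pad_zip c d | c d. c \<in> G1.right_mult_convs e1 \<and> d \<in> G2.right_mult_convs e2}"
    and "c \<in> set t"
  then obtain u u' v v' where c: "c \<in> set (pad_zip (pad_zip u u') (pad_zip v v'))"
    and "u \<in> L1" "u' \<in> L1" "v \<in> L2" "v' \<in> L2"
    unfolding G1.right_mult_convs_def G2.right_mult_convs_def
    using G1.inv_rep_in_L G2.inv_rep_in_L G1.m_closed G2.m_closed e_closed by blast
  then have "u \<in> lists G1.S" "u' \<in> lists G1.S" "v \<in> lists G2.S" "v' \<in> lists G2.S"
    using G1.L_subset_lists G2.L_subset_lists by auto
  then show "set ((symbol_pair_code \<circ> swap_middle) c) \<subseteq> insert None (Some ` Sp) \<times> insert None (Some ` Sp)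
    \<and> length ((symbol_pair_code \<circ> swap_middle) c) = 4"
    using symbol_pair_code_swap_middle[OF c] by simp
qed simp

lemma right_mult_recognizable_prod:
  assumes "e1 \<in> insert \<one>\<^bsub>G1\<^esub> A1" and "e2 \<in> insert \<one>\<^bsub>G2\<^esub> A2"
  shows "fa_recognizable Sp
    {(inv_into prod_lang prod_rep g, inv_into prod_lang prod_rep (g \<otimes>\<^bsub>P\<^esub> (e1, e2))) | g. g \<in> carrier P}"
proof -
  have closed: "e1 \<in> carrier G1" "e2 \<in> carrier G2"
    using assms G1.gens_subset_carrier G2.gens_subset_carrier by auto
  show ?thesis
    unfolding fa_recognizable_def conv_right_mult_prod[OF closed]
    by (rule regular_right_mult_prod_blocks[OF assms])
qed

lemma componentwise_word:
  assumes "w1 \<in> lists G1.S" and "w2 \<in> lists G2.S"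
  shows "map (\<lambda>x. (x, \<one>\<^bsub>G2\<^esub>)) w1 @ map (\<lambda>y. (\<one>\<^bsub>G1\<^esub>, y)) w2 \<in> lists Sp"
    and "eval_word P (map (\<lambda>x. (x, \<one>\<^bsub>G2\<^esub>)) w1 @ map (\<lambda>y. (\<one>\<^bsub>G1\<^esub>, y)) w2) = (eval_word G1 w1, eval_word G2 w2)"
proof -
  show "map (\<lambda>x. (x, \<one>\<^bsub>G2\<^esub>)) w1 @ map (\<lambda>y. (\<one>\<^bsub>G1\<^esub>, y)) w2 \<in> lists Sp"
    using assms left_in_Sp right_in_Sp by auto
  have w: "set w1 \<subseteq> carrier G1" "set w2 \<subseteq> carrier G2"
    using assms G1.S_subset_carrier G2.S_subset_carrier by auto
  then have "eval_word P (map (\<lambda>x. (x, \<one>\<^bsub>G2\<^esub>)) w1 @ map (\<lambda>y. (\<one>\<^bsub>G1\<^esub>, y)) w2) =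
      eval_word P (map (\<lambda>x. (x, \<one>\<^bsub>G2\<^esub>)) w1) \<otimes>\<^bsub>P\<^esub> eval_word P (map (\<lambda>y. (\<one>\<^bsub>G1\<^esub>, y)) w2)"
    by (intro group.eval_word_append[OF group_P]) auto
  also have "\<dots> = (eval_word G1 w1, eval_word G2 w2)"
    using w G1.eval_word_closed G2.eval_word_closed by (simp add: eval_word_map_left eval_word_map_right)
  finally show "eval_word P (map (\<lambda>x. (x, \<one>\<^bsub>G2\<^esub>)) w1 @ map (\<lambda>y. (\<one>\<^bsub>G1\<^esub>, y)) w2) =
      (eval_word G1 w1, eval_word G2 w2)" .
qed

lemma fin_gen_set_prod: "fin_gen_set P prod_gens"
  unfolding fin_gen_set_def
proof (intro conjI)
  show "finite prod_gens"
    using G1.finite_gens G2.finite_gens by (simp add: prod_gens_def)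
  show "prod_gens \<subseteq> carrier P"
    by (rule prod_gens_subset_carrier)
  show "generate P prod_gens = carrier P"
  proof
    show "generate P prod_gens \<subseteq> carrier P"
      using group.generate_incl[OF group_P prod_gens_subset_carrier] .
    show "carrier P \<subseteq> generate P prod_gens"
    proof
      fix g assume "g \<in> carrier P"
      then obtain g1 g2 where g: "g = (g1, g2)" "g1 \<in> generate G1 A1" "g2 \<in> generate G2 A2"
        using G1.generate_gens G2.generate_gens by auto
      obtain w1 w2 where "w1 \<in> lists G1.S" "eval_word G1 w1 = g1" "w2 \<in> lists G2.S" "eval_word G2 w2 = g2"
        using G1.ex_word_if_in_generate[OF G1.gens_subset_carrier g(2)]
          G2.ex_word_if_in_generate[OF G2.gens_subset_carrier g(3)] by blast
      then show "g \<in> generate P prod_gens"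
        using group.eval_word_in_generate[OF group_P prod_gens_subset_carrier] componentwise_word g(1) by metis
    qed
  qed
qed

lemma cayley_aut_rep_prod: "cayley_aut_rep P prod_gens prod_lang prod_rep"
  unfolding cayley_aut_rep_def
proof (intro conjI ballI regular_prod_lang bij_prod_rep)
  fix a assume "a \<in> prod_gens"
  then obtain e1 e2 where "a = (e1, e2)" "e1 \<in> insert \<one>\<^bsub>G1\<^esub> A1" "e2 \<in> insert \<one>\<^bsub>G2\<^esub> A2"
    unfolding prod_gens_def by blast
  then show "fa_recognizable Sp {(inv_into prod_lang prod_rep g, inv_into prod_lang prod_rep (g \<otimes>\<^bsub>P\<^esub> a)) | g. g \<in> carrier P}"
    using right_mult_recognizable_prod by blast
qed

lemma word_length_prod_le:
  assumes "x \<in> carrier G1" and "y \<in> carrier G2"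
  shows "word_length P prod_gens (x, y) \<le> word_length G1 A1 x + word_length G2 A2 y"
proof -
  obtain w1 where w1: "w1 \<in> lists G1.S" "length w1 = word_length G1 A1 x" "eval_word G1 w1 = x"
    using G1.ex_shortest_word[OF G1.fin_gen assms(1)] .
  obtain w2 where w2: "w2 \<in> lists G2.S" "length w2 = word_length G2 A2 y" "eval_word G2 w2 = y"
    using G2.ex_shortest_word[OF G2.fin_gen assms(2)] .
  show ?thesis
    using group.word_length_le[OF group_P componentwise_word(1)[OF w1(1) w2(1)]] componentwise_word(2)[OF w1(1) w2(1)]
      w1 w2 by simp
qed

lemma word_dist_prod_word_le:
  assumes "u \<in> L1" and "v \<in> L2"
  shows "word_dist P prod_gens (eval_word P (prod_word u v)) (prod_rep (prod_word u v)) \<le>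
    word_dist G1 A1 (eval_word G1 u) (\<psi>1 u) + word_dist G2 A2 (eval_word G2 v) (\<psi>2 v)"
proof -
  have "u \<in> lists G1.S" "v \<in> lists G2.S"
    using assms G1.L_subset_lists G2.L_subset_lists by auto
  then have "eval_word P (prod_word u v) = (eval_word G1 u, eval_word G2 v)"
    by (rule eval_prod_word)
  moreover have "eval_word G1 u \<in> carrier G1" "eval_word G2 v \<in> carrier G2"
    using assms by (simp_all add: G1.eval_word_L_closed G2.eval_word_L_closed)
  moreover have "\<psi>1 u \<in> carrier G1" "\<psi>2 v \<in> carrier G2"
    using assms by (simp_all add: G1.rep_closed G2.rep_closed)
  ultimately show ?thesis
    unfolding word_dist_def
    by (simp add: prod_rep_prod_word[OF assms] inv_DirProd[OF G1.is_group G2.is_group] word_length_prod_le)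
qed

lemma caut_fun_prod_le:
  "caut_fun P prod_gens prod_lang prod_rep n \<le> caut_fun G1 A1 L1 \<psi>1 n + caut_fun G2 A2 L2 \<psi>2 n"
proof (rule caut_fun_le[OF finite_Sp regular_lang_subset_lists[OF regular_prod_lang]])
  show "0 \<le> caut_fun G1 A1 L1 \<psi>1 n + caut_fun G2 A2 L2 \<psi>2 n"
    using caut_fun_nonneg[OF G1.finite_S G1.L_subset_lists] caut_fun_nonneg[OF G2.finite_S G2.L_subset_lists]
    by (rule add_nonneg_nonneg)
  fix w assume "w \<in> prod_lang" and len: "length w \<le> n"
  then obtain u v where w: "w = prod_word u v" and u: "u \<in> L1" and v: "v \<in> L2"
    unfolding prod_lang_def by auto
  have "length u \<le> n" "length v \<le> n"
    using len unfolding w length_prod_word by auto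
  have "real (word_dist P prod_gens (eval_word P w) (prod_rep w)) \<le>
      real (word_dist G1 A1 (eval_word G1 u) (\<psi>1 u)) + real (word_dist G2 A2 (eval_word G2 v) (\<psi>2 v))"
    unfolding w using word_dist_prod_word_le[OF u v] by linarith
  also have "\<dots> \<le> caut_fun G1 A1 L1 \<psi>1 n + caut_fun G2 A2 L2 \<psi>2 n"
    using caut_fun_ge[OF G1.finite_S G1.L_subset_lists u \<open>length u \<le> n\<close>]
      caut_fun_ge[OF G2.finite_S G2.L_subset_lists v \<open>length v \<le> n\<close>]
    by (rule add_mono)
  finally show "real (word_dist P prod_gens (eval_word P w) (prod_rep w)) \<le>
      caut_fun G1 A1 L1 \<psi>1 n + caut_fun G2 A2 L2 \<psi>2 n" .
qed

end

lemma preceq_add_bound: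
  assumes "in_frakF f" and "preceq g1 f" and "preceq g2 f" and "\<And>n. h n \<le> g1 n + g2 n"
  shows "preceq h f"
proof -
  obtain Q where mono: "\<And>m n. Q \<le> m \<Longrightarrow> m \<le> n \<Longrightarrow> f m \<le> f n"
    using assms(1) unfolding in_frakF_def by blast
  obtain N1 K1 M1 where "0 < K1" "0 < M1" and g1: "\<And>n. N1 \<le> n \<Longrightarrow> g1 n \<le> real K1 * f (M1 * n)"
    using assms(2) unfolding preceq_def by blast
  obtain N2 K2 M2 where "0 < K2" "0 < M2" and g2: "\<And>n. N2 \<le> n \<Longrightarrow> g2 n \<le> real K2 * f (M2 * n)"
    using assms(3) unfolding preceq_def by blast
  have "h n \<le> real (K1 + K2) * f (M1 * M2 * n)" if n: "max (max N1 N2) Q \<le> n" for n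
  proof -
    have le: "n \<le> M1 * n" "n \<le> M2 * n" "M1 * n \<le> M1 * M2 * n" "M2 * n \<le> M1 * M2 * n"
      using \<open>0 < M1\<close> \<open>0 < M2\<close> by simp_all
    moreover have "Q \<le> M1 * n" "Q \<le> M2 * n"
      using n le by linarith+
    ultimately have "f (M1 * n) \<le> f (M1 * M2 * n)" "f (M2 * n) \<le> f (M1 * M2 * n)"
      by (simp_all add: mono)
    then have "real K1 * f (M1 * n) + real K2 * f (M2 * n) \<le> real (K1 + K2) * f (M1 * M2 * n)"
      by (simp add: distrib_right add_mono mult_left_mono)
    moreover have "h n \<le> real K1 * f (M1 * n) + real K2 * f (M2 * n)"
      using assms(4)[of n] g1[of n] g2[of n] n by simp
    ultimately show ?thesis
      by linarith
  qed
  then show ?thesis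
    unfolding preceq_def using \<open>0 < K1\<close> \<open>0 < M1\<close> \<open>0 < M2\<close>
    by (intro exI[of _ "max (max N1 N2) Q"] exI[of _ "K1 + K2"] exI[of _ "M1 * M2"]) auto
qed

theorem mainTheorem5:
  fixes f :: "nat \<Rightarrow> real"
    and G1 :: "('a, 'm) monoid_scheme" and G2 :: "('b, 'n) monoid_scheme"
  assumes "in_frakF f"
    and "group G1" and "group G2"
    and "in_Bf f G1" and "in_Bf f G2"
  shows "in_Bf f (G1 \<times>\<times> G2)"
proof -
  obtain A1 L1 \<psi>1 where rep1: "fin_gen_set G1 A1" "cayley_aut_rep G1 A1 L1 \<psi>1"
    and h1: "preceq (caut_fun G1 A1 L1 \<psi>1) f"
    using assms(4) unfolding in_Bf_def by blast
  obtain A2 L2 \<psi>2 where rep2: "fin_gen_set G2 A2" "cayley_aut_rep G2 A2 L2 \<psi>2"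
    and h2: "preceq (caut_fun G2 A2 L2 \<psi>2) f"
    using assms(5) unfolding in_Bf_def by blast
  interpret cayley_automatic_pair G1 A1 L1 \<psi>1 G2 A2 L2 \<psi>2
    using assms(2,3) rep1 rep2
    unfolding cayley_automatic_pair_def cayley_automatic_def cayley_automatic_axioms_def by blast
  have "preceq (caut_fun (G1 \<times>\<times> G2) prod_gens prod_lang prod_rep) f"
    using preceq_add_bound[OF assms(1) h1 h2] caut_fun_prod_le .
  then show ?thesis
    unfolding in_Bf_def using fin_gen_set_prod cayley_aut_rep_prod by blast
qed

end
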